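(* Let $G$ be a finite $p$-group ($p$ a prime) and $f\in\mathrm{Aut}(G)$. If $Q=\mathcal{Q}(G,f)$ is a latin, involutory, simply connected quandle, then $G$ is cyclic.
   Context: A quandle is a set $Q$ with a binary operation $*$ such that every left translation $L_x:y\mapsto x*y$ is bijective, $x*(y*z)=(x*y)*(x*z)$ and $x*x=x$. $\mathcal{Q}(G,f)$ is $G$ with $x*y=xf(x^{-1}y)$. $Q$ is latin if every right translation $y\mapsto y*x$ is bijective, involutory if $x*(x*y)=y$ for all $x,y$, and connected if $\langle L_x:x\in Q\rangle$ is transitive. For a set $S$, a quandle cocycle with values in $\mathrm{Sym}_S$ is $\theta:Q\times Q\to\mathrm{Sym}_S$ with $\theta_{x*y,x*z}\theta_{x,z}=\theta_{x,y*z}\theta_{y,z}$ and $\theta_{x,x}=1$; it is cohomologous to the trivial cocycle if there is $\gamma:Q\to\mathrm{Sym}_S$ with $\theta_{x,y}=\gamma_{x*y}\gamma_y^{-1}$ for all $x,y$. $Q$ is simply connected if it is connected and, for every set $S$, every such cocycle is cohomologous to the trivial cocycle. *)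

theory Defs
  imports "HOL-Algebra.Algebra"
begin

definition is_quandle :: "'a set \<Rightarrow> ('a \<Rightarrow> 'a \<Rightarrow> 'a) \<Rightarrow> bool" where
  "is_quandle Q op \<longleftrightarrow>
     (\<forall>x\<in>Q. \<forall>y\<in>Q. op x y \<in> Q) \<and>
     (\<forall>x\<in>Q. bij_betw (op x) Q Q) \<and>
     (\<forall>x\<in>Q. \<forall>y\<in>Q. \<forall>z\<in>Q. op x (op y z) = op (op x y) (op x z)) \<and>
     (\<forall>x\<in>Q. op x x = x)"

definition coset_qop :: "('g, 'b) monoid_scheme \<Rightarrow> ('g \<Rightarrow> 'g) \<Rightarrow> 'g \<Rightarrow> 'g \<Rightarrow> 'g" where
  "coset_qop G f x y = x \<otimes>\<^bsub>G\<^esub> f (inv\<^bsub>G\<^esub> x \<otimes>\<^bsub>G\<^esub> y)"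

definition quandle_latin :: "'a set \<Rightarrow> ('a \<Rightarrow> 'a \<Rightarrow> 'a) \<Rightarrow> bool" where
  "quandle_latin Q op \<longleftrightarrow> (\<forall>x\<in>Q. bij_betw (\<lambda>y. op y x) Q Q)"

definition quandle_involutory :: "'a set \<Rightarrow> ('a \<Rightarrow> 'a \<Rightarrow> 'a) \<Rightarrow> bool" where
  "quandle_involutory Q op \<longleftrightarrow> (\<forall>x\<in>Q. \<forall>y\<in>Q. op x (op x y) = y)"

text \<open>Connectedness = the group generated by the L_a acts transitively, i.e.
  any two elements are joined by a finite word in the L_a and their inverses.\<close>
definition ltrans_step :: "'a set \<Rightarrow> ('a \<Rightarrow> 'a \<Rightarrow> 'a) \<Rightarrow> ('a \<times> 'a) set" where
  "ltrans_step Q op = {(u, op a u) | a u. a \<in> Q \<and> u \<in> Q}"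

definition quandle_connected :: "'a set \<Rightarrow> ('a \<Rightarrow> 'a \<Rightarrow> 'a) \<Rightarrow> bool" where
  "quandle_connected Q op \<longleftrightarrow>
     (\<forall>x\<in>Q. \<forall>y\<in>Q. (x, y) \<in> (ltrans_step Q op \<union> converse (ltrans_step Q op))\<^sup>*)"

definition Sym :: "'s set \<Rightarrow> ('s \<Rightarrow> 's) set" where
  "Sym S = {g. bij_betw g S S \<and> (\<forall>x. x \<notin> S \<longrightarrow> g x = x)}"

definition quandle_cocycle ::
  "'a set \<Rightarrow> ('a \<Rightarrow> 'a \<Rightarrow> 'a) \<Rightarrow> 's set \<Rightarrow> ('a \<Rightarrow> 'a \<Rightarrow> 's \<Rightarrow> 's) \<Rightarrow> bool" where
  "quandle_cocycle Q op S \<theta> \<longleftrightarrow>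
     (\<forall>x\<in>Q. \<forall>y\<in>Q. \<theta> x y \<in> Sym S) \<and>
     (\<forall>x\<in>Q. \<forall>y\<in>Q. \<forall>z\<in>Q.
        \<theta> (op x y) (op x z) \<circ> \<theta> x z = \<theta> x (op y z) \<circ> \<theta> y z) \<and>
     (\<forall>x\<in>Q. \<theta> x x = id)"

definition cohomologous_trivial ::
  "'a set \<Rightarrow> ('a \<Rightarrow> 'a \<Rightarrow> 'a) \<Rightarrow> 's set \<Rightarrow> ('a \<Rightarrow> 'a \<Rightarrow> 's \<Rightarrow> 's) \<Rightarrow> bool" where
  "cohomologous_trivial Q op S \<theta> \<longleftrightarrow>
     (\<exists>\<gamma>. (\<forall>x\<in>Q. \<gamma> x \<in> Sym S) \<and>
          (\<forall>x\<in>Q. \<forall>y\<in>Q. \<theta> x y = \<gamma> (op x y) \<circ> Hilbert_Choice.inv (\<gamma> y)))"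

text \<open>Simply connected. The sets S range over subsets of nat (all countable sets): for finite Q this is equivalent to quantifying over all sets.\<close>
definition simply_connected :: "'a set \<Rightarrow> ('a \<Rightarrow> 'a \<Rightarrow> 'a) \<Rightarrow> bool" where
  "simply_connected Q op \<longleftrightarrow> quandle_connected Q op \<and>
     (\<forall>(S::nat set) \<theta>. quandle_cocycle Q op S \<theta> \<longrightarrow> cohomologous_trivial Q op S \<theta>)"

end

theory Submission
  imports Defs "HOL-Number_Theory.Cong"
begin

(* Latin and involutory force f to be inversion, so G is abelian and Q(G,f) is the core quandle
   x * y = x y^-1 x.  If G is not cyclic, it has two maximal subgroups neither of which contains
   the other; they are the kernels of two characters phi, psi : G -> Z/p, and their wedge
   w(x,y) = phi(x) psi(y) - phi(y) psi(x) does not vanish identically.  Rotating Z/p by w(x,y)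
   is a quandle cocycle that is trivial on the column x * 1.  Since x |-> x * 1 is onto, any
   coboundary gamma for it is constant, so the cocycle itself would be trivial: contradiction. *)

section \<open>Rotation cocycles\<close>

definition rotation :: "nat \<Rightarrow> int \<Rightarrow> nat \<Rightarrow> nat" where
  "rotation q k s = (if s < q then nat ((int s + k) mod int q) else s)"

lemma rotation_0 [simp]: "rotation q 0 = id"
  by (rule ext) (simp add: rotation_def)

lemma rotation_add:
  assumes "0 < q"
  shows "rotation q a \<circ> rotation q b = rotation q (a + b)"
proof
  fix s
  show "(rotation q a \<circ> rotation q b) s = rotation q (a + b) s"
  proof (cases "s < q")
    case True
    have "nat ((int s + b) mod int q) < q" "int (nat ((int s + b) mod int q)) = (int s + b) mod int q"
      using assms by (simp_all add: nat_less_iff)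
    then show ?thesis
      using True by (simp add: rotation_def mod_add_left_eq add.assoc add.commute[of b a])
  qed (simp add: rotation_def)
qed

lemma rotation_cong:
  assumes "[a = b] (mod int q)"
  shows "rotation q a = rotation q b"
proof
  fix s
  have "[int s + a = int s + b] (mod int q)"
    using assms by (simp add: cong_add_lcancel)
  then show "rotation q a s = rotation q b s"
    by (simp add: rotation_def cong_def)
qed

lemma rotation_permutes:
  assumes "0 < q"
  shows "rotation q k permutes {..<q}"
proof (rule bij_imp_permutes)
  have "rotation q (- k) (rotation q k s) = s" "rotation q k (rotation q (- k) s) = s" for s
    using fun_cong[OF rotation_add[OF assms, of "- k" k], of s]
      fun_cong[OF rotation_add[OF assms, of k "- k"], of s]
    by simp_all
  moreover have "rotation q j s < q" if "s < q" for j s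
    using that assms by (simp add: rotation_def nat_less_iff)
  ultimately show "bij_betw (rotation q k) {..<q} {..<q}"
    by (intro bij_betw_byWitness[where f' = "rotation q (- k)"]) auto
qed (simp add: rotation_def)

lemma rotation_eq_id_imp_cong_0:
  assumes "0 < q" "rotation q k = id"
  shows "[k = 0] (mod int q)"
proof -
  have "nat (k mod int q) = 0"
    using fun_cong[OF assms(2), of 0] assms(1) by (simp add: rotation_def)
  moreover have "0 \<le> k mod int q"
    using assms(1) by simp
  ultimately show ?thesis
    by (simp add: cong_def)
qed

lemma Sym_eq_permutes: "Sym S = {g. g permutes S}"
  by (auto simp: Sym_def permutes_imp_bij permutes_not_in intro: bij_imp_permutes)

lemma rotation_cocycle:
  assumes q: "0 < q"
    and diag: "\<And>x. x \<in> Q \<Longrightarrow> [\<omega> x x = 0] (mod int q)"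
    and cocycle: "\<And>x y z. \<lbrakk>x \<in> Q; y \<in> Q; z \<in> Q\<rbrakk> \<Longrightarrow>
      [\<omega> (op x y) (op x z) + \<omega> x z = \<omega> x (op y z) + \<omega> y z] (mod int q)"
  shows "quandle_cocycle Q op {..<q} (\<lambda>x y. rotation q (\<omega> x y))"
proof -
  have "rotation q (\<omega> x x) = id" if "x \<in> Q" for x
    using rotation_cong[OF diag[OF that]] by simp
  moreover have "rotation q (\<omega> (op x y) (op x z)) \<circ> rotation q (\<omega> x z)
      = rotation q (\<omega> x (op y z)) \<circ> rotation q (\<omega> y z)" if "x \<in> Q" "y \<in> Q" "z \<in> Q" for x y z
    using rotation_cong[OF cocycle[OF that]] by (simp add: rotation_add[OF q])
  ultimately show ?thesis
    unfolding quandle_cocycle_def Sym_eq_permutes by (simp add: rotation_permutes[OF q])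
qed

lemma cohomologous_trivial_latin_imp_trivial:
  assumes cob: "cohomologous_trivial Q op S \<theta>" and latin: "quandle_latin Q op"
    and e: "e \<in> Q" and column: "\<And>x. x \<in> Q \<Longrightarrow> \<theta> x e = id"
    and x: "x \<in> Q" and y: "y \<in> Q"
  shows "\<theta> x y = id"
proof -
  obtain \<gamma> where perm: "\<And>x. x \<in> Q \<Longrightarrow> \<gamma> x permutes S"
    and \<theta>: "\<And>x y. x \<in> Q \<Longrightarrow> y \<in> Q \<Longrightarrow> \<theta> x y = \<gamma> (op x y) \<circ> Hilbert_Choice.inv (\<gamma> y)"
    using cob unfolding cohomologous_trivial_def Sym_eq_permutes by blast
  have onto: "(\<lambda>w. op w z) ` Q = Q" if "z \<in> Q" for z
    using latin that by (simp add: quandle_latin_def bij_betw_def)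
  have \<gamma>_const: "\<gamma> z = \<gamma> e" if "z \<in> Q" for z
  proof -
    have "z \<in> (\<lambda>w. op w e) ` Q"
      using onto[OF e] that by simp
    then obtain w where w: "w \<in> Q" "z = op w e"
      by blast
    have "\<gamma> z \<circ> Hilbert_Choice.inv (\<gamma> e) = id"
      using \<theta>[OF w(1) e] column[OF w(1)] w(2) by simp
    then have "\<gamma> z \<circ> Hilbert_Choice.inv (\<gamma> e) \<circ> \<gamma> e = \<gamma> e"
      by simp
    then show ?thesis
      using permutes_inv_o(2)[OF perm[OF e]] by (simp add: comp_assoc)
  qed
  have "op x y \<in> Q"
    using imageI[OF x, of "\<lambda>w. op w y"] onto[OF y] by simp
  then show ?thesis
    using \<theta>[OF x y] \<gamma>_const[OF y] \<gamma>_const[OF \<open>op x y \<in> Q\<close>] permutes_inv_o(1)[OF perm[OF e]]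
    by simp
qed

section \<open>Characters modulo q and the wedge cocycle\<close>

definition mod_character :: "('g, 'b) monoid_scheme \<Rightarrow> int \<Rightarrow> ('g \<Rightarrow> int) \<Rightarrow> bool" where
  "mod_character G q \<chi> \<longleftrightarrow>
     (\<forall>x\<in>carrier G. \<forall>y\<in>carrier G. [\<chi> (x \<otimes>\<^bsub>G\<^esub> y) = \<chi> x + \<chi> y] (mod q))"

definition wedge :: "('g \<Rightarrow> int) \<Rightarrow> ('g \<Rightarrow> int) \<Rightarrow> 'g \<Rightarrow> 'g \<Rightarrow> int" where
  "wedge \<phi> \<psi> x y = \<phi> x * \<psi> y - \<phi> y * \<psi> x"

lemma wedge_cong:
  assumes "[\<phi> x = a1] (mod q)" "[\<psi> x = a2] (mod q)" "[\<phi> y = b1] (mod q)" "[\<psi> y = b2] (mod q)"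
  shows "[wedge \<phi> \<psi> x y = a1 * b2 - b1 * a2] (mod q)"
  unfolding wedge_def using assms by (intro cong_diff cong_mult)

context group
begin

lemma mod_character_mult:
  "mod_character G q \<chi> \<Longrightarrow> x \<in> carrier G \<Longrightarrow> y \<in> carrier G \<Longrightarrow> [\<chi> (x \<otimes> y) = \<chi> x + \<chi> y] (mod q)"
  by (simp add: mod_character_def)

lemma mod_character_one:
  assumes "mod_character G q \<chi>"
  shows "[\<chi> \<one> = 0] (mod q)"
proof -
  have "[\<chi> \<one> = \<chi> \<one> + \<chi> \<one>] (mod q)"
    using mod_character_mult[OF assms one_closed one_closed] by simp
  then show ?thesis
    by (simp add: cong_iff_dvd_diff)
qed

lemma mod_character_inv:
  assumes \<chi>: "mod_character G q \<chi>" and x: "x \<in> carrier G"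
  shows "[\<chi> (inv x) = - \<chi> x] (mod q)"
proof -
  have "[\<chi> \<one> = \<chi> x + \<chi> (inv x)] (mod q)"
    using mod_character_mult[OF \<chi> x inv_closed[OF x]] x by simp
  from cong_trans[OF cong_sym[OF this] mod_character_one[OF \<chi>]]
  show ?thesis
    by (simp add: cong_iff_dvd_diff add.commute)
qed

lemma mod_character_core:
  assumes \<chi>: "mod_character G q \<chi>" and x: "x \<in> carrier G" and y: "y \<in> carrier G"
  shows "[\<chi> (x \<otimes> (inv y \<otimes> x)) = 2 * \<chi> x - \<chi> y] (mod q)"
proof -
  have "[\<chi> (x \<otimes> (inv y \<otimes> x)) = \<chi> x + \<chi> (inv y \<otimes> x)] (mod q)"
    using x y by (simp add: mod_character_mult[OF \<chi>])
  also have "[\<chi> x + \<chi> (inv y \<otimes> x) = \<chi> x + (\<chi> (inv y) + \<chi> x)] (mod q)"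
    using mod_character_mult[OF \<chi> inv_closed[OF y] x] by (simp only: cong_add_lcancel)
  also have "[\<chi> x + (\<chi> (inv y) + \<chi> x) = \<chi> x + (- \<chi> y + \<chi> x)] (mod q)"
    using mod_character_inv[OF \<chi> y] by (simp only: cong_add_lcancel cong_add_rcancel)
  finally show ?thesis
    by (simp add: algebra_simps)
qed

lemma wedge_core_cocycle:
  assumes \<phi>: "mod_character G q \<phi>" and \<psi>: "mod_character G q \<psi>"
    and x: "x \<in> carrier G" and y: "y \<in> carrier G" and z: "z \<in> carrier G"
  shows "[wedge \<phi> \<psi> (x \<otimes> (inv y \<otimes> x)) (x \<otimes> (inv z \<otimes> x)) + wedge \<phi> \<psi> x z
    = wedge \<phi> \<psi> x (y \<otimes> (inv z \<otimes> y)) + wedge \<phi> \<psi> y z] (mod q)"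
proof -
  note core1 = mod_character_core[OF \<phi>] and core2 = mod_character_core[OF \<psi>]
  have lhs: "[wedge \<phi> \<psi> (x \<otimes> (inv y \<otimes> x)) (x \<otimes> (inv z \<otimes> x)) + wedge \<phi> \<psi> x z
      = ((2 * \<phi> x - \<phi> y) * (2 * \<psi> x - \<psi> z) - (2 * \<phi> x - \<phi> z) * (2 * \<psi> x - \<psi> y))
        + wedge \<phi> \<psi> x z] (mod q)"
    using cong_add[OF wedge_cong[where \<phi> = \<phi> and \<psi> = \<psi>,
          OF core1[OF x y] core2[OF x y] core1[OF x z] core2[OF x z]] cong_refl] .
  have rhs: "[wedge \<phi> \<psi> x (y \<otimes> (inv z \<otimes> y)) + wedge \<phi> \<psi> y z
      = (\<phi> x * (2 * \<psi> y - \<psi> z) - (2 * \<phi> y - \<phi> z) * \<psi> x) + wedge \<phi> \<psi> y z] (mod q)"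
    using cong_add[OF wedge_cong[where \<phi> = \<phi> and \<psi> = \<psi>,
          OF cong_refl cong_refl core1[OF y z] core2[OF y z]] cong_refl] .
  have "((2 * \<phi> x - \<phi> y) * (2 * \<psi> x - \<psi> z) - (2 * \<phi> x - \<phi> z) * (2 * \<psi> x - \<psi> y))
        + wedge \<phi> \<psi> x z
      = (\<phi> x * (2 * \<psi> y - \<psi> z) - (2 * \<phi> y - \<phi> z) * \<psi> x) + wedge \<phi> \<psi> y z"
    by (simp add: wedge_def algebra_simps)
  with lhs have "[wedge \<phi> \<psi> (x \<otimes> (inv y \<otimes> x)) (x \<otimes> (inv z \<otimes> x)) + wedge \<phi> \<psi> x z
      = (\<phi> x * (2 * \<psi> y - \<psi> z) - (2 * \<phi> y - \<phi> z) * \<psi> x) + wedge \<phi> \<psi> y z] (mod q)"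
    by simp
  from cong_trans[OF this cong_sym[OF rhs]] show ?thesis .
qed

lemma simply_connected_core_imp_wedge_cong_0:
  assumes core: "\<And>x y. x \<in> carrier G \<Longrightarrow> y \<in> carrier G \<Longrightarrow> op x y = x \<otimes> (inv y \<otimes> x)"
    and latin: "quandle_latin (carrier G) op" and simply_connected: "simply_connected (carrier G) op"
    and p: "0 < p" and \<phi>: "mod_character G (int p) \<phi>" and \<psi>: "mod_character G (int p) \<psi>"
    and u: "u \<in> carrier G" and v: "v \<in> carrier G"
  shows "[wedge \<phi> \<psi> u v = 0] (mod int p)"
proof -
  define \<theta> where "\<theta> x y = rotation p (wedge \<phi> \<psi> x y)" for x y
  have "quandle_cocycle (carrier G) op {..<p} \<theta>"
    unfolding \<theta>_def
  proof (rule rotation_cocycle[OF p])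
    show "[wedge \<phi> \<psi> x x = 0] (mod int p)" for x
      by (simp add: wedge_def)
    show "[wedge \<phi> \<psi> (op x y) (op x z) + wedge \<phi> \<psi> x z
        = wedge \<phi> \<psi> x (op y z) + wedge \<phi> \<psi> y z] (mod int p)"
      if "x \<in> carrier G" "y \<in> carrier G" "z \<in> carrier G" for x y z
      using wedge_core_cocycle[OF \<phi> \<psi> that] that by (simp add: core)
  qed
  then have "cohomologous_trivial (carrier G) op {..<p} \<theta>"
    using simply_connected by (simp add: simply_connected_def)
  moreover have "\<theta> x \<one> = id" if "x \<in> carrier G" for x
  proof -
    have "[wedge \<phi> \<psi> x \<one> = \<phi> x * 0 - 0 * \<psi> x] (mod int p)"
      by (rule wedge_cong[where \<phi> = \<phi> and \<psi> = \<psi>, OF cong_refl cong_refl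
            mod_character_one[OF \<phi>] mod_character_one[OF \<psi>]])
    then show ?thesis
      unfolding \<theta>_def using rotation_cong by fastforce
  qed
  ultimately have "\<theta> u v = id"
    using cohomologous_trivial_latin_imp_trivial[OF _ latin one_closed] u v by blast
  then show ?thesis
    using rotation_eq_id_imp_cong_0[OF p] unfolding \<theta>_def by blast
qed

end

section \<open>The quandle Q(G,f) for latin involutory f\<close>

context group
begin

lemma comm_group_if_inv_mult_distrib:
  assumes "\<And>x y. x \<in> carrier G \<Longrightarrow> y \<in> carrier G \<Longrightarrow> inv (x \<otimes> y) = inv x \<otimes> inv y"
  shows "comm_group G"
proof (rule group_comm_groupI)
  fix x y
  assume "x \<in> carrier G" "y \<in> carrier G"
  then have "x \<otimes> y = inv (inv y \<otimes> inv x)"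
    by (simp add: inv_mult_group)
  also have "\<dots> = y \<otimes> x"
    using assms \<open>x \<in> carrier G\<close> \<open>y \<in> carrier G\<close> by simp
  finally show "x \<otimes> y = y \<otimes> x" .
qed

lemma coset_qop_latin_involutory_imp_inv:
  assumes f: "f \<in> hom G G"
    and latin: "quandle_latin (carrier G) (coset_qop G f)"
    and involutory: "quandle_involutory (carrier G) (coset_qop G f)"
    and z: "z \<in> carrier G"
  shows "f z = inv z"
proof -
  interpret f: group_hom G G f
    by (simp add: group_hom_def group_hom_axioms_def f is_group)
  have ff: "f (f y) = y" if "y \<in> carrier G" for y
  proof -
    have "coset_qop G f \<one> (coset_qop G f \<one> y) = y"
      using involutory that by (simp add: quandle_involutory_def)
    then show ?thesis
      using that by (simp add: coset_qop_def)
  qed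
  have "z \<in> (\<lambda>y. coset_qop G f y \<one>) ` carrier G"
    using latin z by (simp add: quandle_latin_def bij_betw_def)
  then obtain y where y: "y \<in> carrier G" "z = y \<otimes> inv (f y)"
    by (auto simp: coset_qop_def)
  then have "f z = f y \<otimes> inv y"
    by (simp add: ff)
  also have "\<dots> = inv z"
    using y by (simp add: inv_mult_group)
  finally show ?thesis .
qed

lemma coset_qop_eq_core:
  assumes "\<And>z. z \<in> carrier G \<Longrightarrow> f z = inv z" "x \<in> carrier G" "y \<in> carrier G"
  shows "coset_qop G f x y = x \<otimes> (inv y \<otimes> x)"
  using assms by (simp add: coset_qop_def inv_mult_group)

end

section \<open>Maximal subgroups of finite abelian p-groups\<close>

definition maximal_subgroup :: "'a set \<Rightarrow> ('a, 'b) monoid_scheme \<Rightarrow> bool" where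
  "maximal_subgroup M G \<longleftrightarrow> subgroup M G \<and> M \<noteq> carrier G \<and>
     (\<forall>K. subgroup K G \<longrightarrow> M \<subseteq> K \<longrightarrow> K = M \<or> K = carrier G)"

context group
begin

lemma maximal_subgroup_exists:
  assumes fin: "finite (carrier G)" and H: "subgroup H G" "H \<noteq> carrier G"
  obtains M where "maximal_subgroup M G" "H \<subseteq> M"
proof -
  define F where "F = {K. subgroup K G \<and> H \<subseteq> K \<and> K \<noteq> carrier G}"
  have "F \<subseteq> Pow (carrier G)"
    unfolding F_def using subgroup.subset by blast
  then have "finite F"
    using fin by (meson finite_Pow_iff finite_subset)
  moreover have "H \<in> F"
    using H unfolding F_def by blast
  ultimately obtain M where M: "M \<in> F" and max: "\<And>K. K \<in> F \<Longrightarrow> M \<subseteq> K \<Longrightarrow> M = K"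
    using finite_has_maximal by (metis empty_iff)
  have "maximal_subgroup M G"
    using M max unfolding maximal_subgroup_def F_def by blast
  with M show thesis
    using that unfolding F_def by blast
qed

lemma not_cyclic_imp_crossing_maximal_subgroups:
  assumes fin: "finite (carrier G)" and not_cyclic: "\<not> cyclic_group G"
  obtains M1 M2 u v where "maximal_subgroup M1 G" "maximal_subgroup M2 G" "u \<in> M1 - M2" "v \<in> M2 - M1"
proof -
  have "{\<one>} \<noteq> carrier G"
    using not_cyclic trivial_imp_cyclic_group by (auto simp: trivial_group_def is_group)
  then obtain M1 where M1: "maximal_subgroup M1 G"
    using maximal_subgroup_exists[OF fin triv_subgroup] by blast
  then obtain v where v: "v \<in> carrier G" "v \<notin> M1"
    unfolding maximal_subgroup_def using subgroup.subset by blast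
  have "range (\<lambda>n::int. v [^] n) \<noteq> carrier G"
    using not_cyclic v(1) cyclic_group by blast
  then obtain M2 where M2: "maximal_subgroup M2 G" "range (\<lambda>n::int. v [^] n) \<subseteq> M2"
    using maximal_subgroup_exists[OF fin subgroup_of_powers[OF v(1)]] by blast
  have "v \<in> M2"
    using M2(2) v(1) int_pow_1[OF v(1)] by (metis range_eqI subsetD)
  then have "\<not> M1 \<subseteq> M2"
    using M1 M2(1) v(2) unfolding maximal_subgroup_def by blast
  then obtain u where "u \<in> M1 - M2"
    by blast
  with M1 M2(1) v(2) \<open>v \<in> M2\<close> show thesis
    using that by blast
qed

lemma int_pow_mem_subgroup_coprime:
  assumes M: "subgroup M G" and g: "g \<in> carrier G"
    and "g [^] (a::int) \<in> M" "g [^] (b::int) \<in> M" "coprime a b"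
  shows "g \<in> M"
proof -
  obtain s t where "s * a + t * b = 1"
    using bezout_int[of a b] \<open>coprime a b\<close> by (auto simp: coprime_iff_gcd_eq_1)
  then have "g = (g [^] a) [^] s \<otimes> (g [^] b) [^] t"
    using g by (simp add: int_pow_pow int_pow_mult[symmetric] mult.commute)
  also have "\<dots> \<in> M"
    using assms by (simp add: subgroup.m_closed subgroup_int_pow_closed)
  finally show ?thesis .
qed

lemma p_group_int_pow_mem_subgroup_imp_dvd:
  assumes card: "card (carrier G) = p ^ n" and p: "Factorial_Ring.prime p"
    and M: "subgroup M G" and g: "g \<in> carrier G" "g \<notin> M" and gi: "g [^] (i::int) \<in> M"
  shows "int p dvd i"
proof (rule ccontr)
  assume "\<not> int p dvd i"
  with p have "coprime (int p) i"
    by (intro prime_imp_coprime) simp_all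
  then have "coprime i (int p ^ n)"
    by (simp add: coprime_commute)
  moreover have "g [^] (int p ^ n) \<in> M"
    using pow_order_eq_1[OF g(1)] card M by (simp add: order_def int_pow_int[symmetric] subgroup.one_closed)
  ultimately have "g \<in> M"
    using int_pow_mem_subgroup_coprime[OF M g(1) gi] by blast
  with g(2) show False ..
qed

end

context comm_group
begin

lemma maximal_subgroup_set_mult_powers:
  assumes M: "maximal_subgroup M G" and h: "h \<in> carrier G" "h \<notin> M"
  shows "M <#> range (\<lambda>j::int. h [^] j) = carrier G"
proof -
  have sub: "subgroup M G"
    using M by (simp add: maximal_subgroup_def)
  have "M \<subseteq> M <#> range (\<lambda>j::int. h [^] j)"
  proof
    fix m assume "m \<in> M"
    then have "m = m \<otimes> h [^] (0::int)"
      using sub h(1) by (simp add: subgroup.mem_carrier)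
    with \<open>m \<in> M\<close> show "m \<in> M <#> range (\<lambda>j::int. h [^] j)"
      unfolding set_mult_def by blast
  qed
  moreover have "h \<in> M <#> range (\<lambda>j::int. h [^] j)"
  proof -
    have "h = \<one> \<otimes> h [^] (1::int)"
      using h(1) by simp
    then show ?thesis
      unfolding set_mult_def using subgroup.one_closed[OF sub] by blast
  qed
  ultimately show ?thesis
    using M h(2) mult_subgroups[OF sub subgroup_of_powers[OF h(1)]]
    unfolding maximal_subgroup_def by blast
qed

lemma p_group_maximal_subgroup_int_pow_mem_iff:
  assumes card: "card (carrier G) = p ^ n" and p: "Factorial_Ring.prime p"
    and M: "maximal_subgroup M G" and g: "g \<in> carrier G" "g \<notin> M"
  shows "g [^] (i::int) \<in> M \<longleftrightarrow> int p dvd i"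
proof -
  have sub: "subgroup M G"
    using M by (simp add: maximal_subgroup_def)
  note dvd = p_group_int_pow_mem_subgroup_imp_dvd[OF card p sub g]
  have "g [^] int p \<in> M"
  proof (rule ccontr)
    assume "g [^] int p \<notin> M"
    then have "g \<in> M <#> range (\<lambda>j::int. (g [^] int p) [^] j)"
      using maximal_subgroup_set_mult_powers[OF M] g(1) by simp
    then obtain m j where m: "m \<in> M" and g_eq: "g = m \<otimes> g [^] (int p * j)"
      unfolding set_mult_def using g(1) by (auto simp: int_pow_pow)
    have "g [^] (1 - int p * j) = g \<otimes> inv (g [^] (int p * j))"
      using g(1) by (simp add: int_pow_diff)
    also have "\<dots> = (m \<otimes> g [^] (int p * j)) \<otimes> inv (g [^] (int p * j))"
      using g_eq by (rule arg_cong[where f = "\<lambda>a. a \<otimes> inv (g [^] (int p * j))"])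
    also have "\<dots> = m"
      using g(1) subgroup.mem_carrier[OF sub m] by (simp add: m_assoc)
    finally have "g [^] (1 - int p * j) = m" .
    then have "int p dvd 1 - int p * j"
      using dvd m by simp
    then have "int p dvd (1 - int p * j) + int p * j"
      by (rule dvd_add) simp
    then show False
      using p by simp
  qed
  then show ?thesis
    using dvd sub g(1) by (auto simp: int_pow_pow[symmetric] subgroup_int_pow_closed)
qed

lemma mod_character_with_kernel:
  assumes M: "subgroup M G" and g: "g \<in> carrier G"
    and gen: "M <#> range (\<lambda>j::int. g [^] j) = carrier G"
    and ker: "\<And>i::int. g [^] i \<in> M \<longleftrightarrow> q dvd i"
  obtains \<chi> where "mod_character G q \<chi>" "\<And>x. x \<in> carrier G \<Longrightarrow> q dvd \<chi> x \<longleftrightarrow> x \<in> M"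
proof -
  define P where "P x j \<longleftrightarrow> (\<exists>m\<in>M. x = m \<otimes> g [^] j)" for x and j :: int
  have P_ex: "\<exists>j. P x j" if "x \<in> carrier G" for x
    using that unfolding gen[symmetric] set_mult_def P_def by blast
  have P_unique: "q dvd i - j" if "P x i" "P x j" for x i j
  proof -
    obtain m m' where m: "m \<in> M" "m' \<in> M" and eq: "m \<otimes> g [^] i = m' \<otimes> g [^] j"
      using \<open>P x i\<close> \<open>P x j\<close> unfolding P_def by metis
    have mc: "m \<in> carrier G" "m' \<in> carrier G"
      using m subgroup.mem_carrier[OF M] by auto
    have "g [^] (i - j) = inv m \<otimes> (m \<otimes> g [^] i) \<otimes> inv (g [^] j)"
      using g mc by (simp add: int_pow_diff m_assoc[symmetric])
    also have "\<dots> = inv m \<otimes> m'"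
      using g mc by (simp add: eq m_assoc)
    finally have "g [^] (i - j) = inv m \<otimes> m'" .
    then show ?thesis
      using ker M m by (metis subgroup.m_closed subgroup.m_inv_closed)
  qed
  have P_mult: "P (x \<otimes> y) (i + j)" if Px: "P x i" and Py: "P y j" for x y i j
  proof -
    obtain m m' where "m \<in> M" "m' \<in> M" "x = m \<otimes> g [^] i" "y = m' \<otimes> g [^] j"
      using Px Py unfolding P_def by blast
    moreover have "(m \<otimes> g [^] i) \<otimes> (m' \<otimes> g [^] j) = (m \<otimes> m') \<otimes> g [^] (i + j)"
      using g subgroup.mem_carrier[OF M] calculation(1,2) by (simp add: int_pow_mult m_ac)
    ultimately show ?thesis
      unfolding P_def using subgroup.m_closed[OF M] by blast
  qed
  define \<chi> where "\<chi> x = (SOME j. P x j)" for x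
  have P_\<chi>: "P x (\<chi> x)" if "x \<in> carrier G" for x
    unfolding \<chi>_def using P_ex[OF that] by (rule someI_ex)
  show thesis
  proof
    show "mod_character G q \<chi>"
      unfolding mod_character_def cong_iff_dvd_diff
      using P_unique P_mult P_\<chi> by (metis m_closed)
  next
    fix x assume x: "x \<in> carrier G"
    have "P x 0 \<longleftrightarrow> x \<in> M"
      using g M by (auto simp: P_def subgroup.mem_carrier)
    show "q dvd \<chi> x \<longleftrightarrow> x \<in> M"
    proof
      assume "q dvd \<chi> x"
      then show "x \<in> M"
        using P_\<chi>[OF x] ker M by (auto simp: P_def subgroup.m_closed)
    next
      assume "x \<in> M"
      then show "q dvd \<chi> x"
        using P_unique[OF P_\<chi>[OF x]] \<open>P x 0 \<longleftrightarrow> x \<in> M\<close> by fastforce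
    qed
  qed
qed

lemma p_group_maximal_subgroup_mod_character:
  assumes card: "card (carrier G) = p ^ n" and p: "Factorial_Ring.prime p"
    and M: "maximal_subgroup M G"
  obtains \<chi> where "mod_character G (int p) \<chi>" "\<And>x. x \<in> carrier G \<Longrightarrow> int p dvd \<chi> x \<longleftrightarrow> x \<in> M"
proof -
  obtain g where g: "g \<in> carrier G" "g \<notin> M"
    using M unfolding maximal_subgroup_def using subgroup.subset by blast
  show thesis
    using mod_character_with_kernel[OF _ g(1) maximal_subgroup_set_mult_powers[OF M g]
        p_group_maximal_subgroup_int_pow_mem_iff[OF card p M g]] M that
    by (auto simp: maximal_subgroup_def)
qed

lemma p_group_not_cyclic_imp_wedge_not_cong_0:
  assumes fin: "finite (carrier G)" and card: "card (carrier G) = p ^ n" and p: "Factorial_Ring.prime p"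
    and not_cyclic: "\<not> cyclic_group G"
  obtains \<phi> \<psi> u v where "mod_character G (int p) \<phi>" "mod_character G (int p) \<psi>"
    "u \<in> carrier G" "v \<in> carrier G" "\<not> [wedge \<phi> \<psi> u v = 0] (mod int p)"
proof -
  obtain M1 M2 u v where M: "maximal_subgroup M1 G" "maximal_subgroup M2 G"
    and u: "u \<in> M1 - M2" and v: "v \<in> M2 - M1"
    by (rule not_cyclic_imp_crossing_maximal_subgroups[OF fin not_cyclic])
  have uv: "u \<in> carrier G" "v \<in> carrier G"
    using M u v subgroup.subset unfolding maximal_subgroup_def by blast+
  obtain \<phi> where \<phi>: "mod_character G (int p) \<phi>" "\<And>x. x \<in> carrier G \<Longrightarrow> int p dvd \<phi> x \<longleftrightarrow> x \<in> M1"
    using p_group_maximal_subgroup_mod_character[OF card p M(1)] by blast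
  obtain \<psi> where \<psi>: "mod_character G (int p) \<psi>" "\<And>x. x \<in> carrier G \<Longrightarrow> int p dvd \<psi> x \<longleftrightarrow> x \<in> M2"
    using p_group_maximal_subgroup_mod_character[OF card p M(2)] by blast
  have "Factorial_Ring.prime (int p)"
    using p by simp
  then have "\<not> int p dvd \<phi> v * \<psi> u"
    using \<phi>(2)[OF uv(2)] \<psi>(2)[OF uv(1)] u v by (simp add: prime_dvd_mult_iff)
  moreover have "int p dvd \<phi> u * \<psi> v"
    using \<phi>(2)[OF uv(1)] u by simp
  moreover have "\<phi> v * \<psi> u = \<phi> u * \<psi> v - wedge \<phi> \<psi> u v"
    by (simp add: wedge_def)
  ultimately have "\<not> int p dvd wedge \<phi> \<psi> u v"
    by (metis dvd_diff)
  with \<phi>(1) \<psi>(1) uv show thesis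
    by (intro that) (simp_all add: cong_0_iff)
qed

end

theorem proposition4p6:
  fixes G :: "('g, 'b) monoid_scheme" and f :: "'g \<Rightarrow> 'g" and p :: nat
  assumes "group G"
    and "finite (carrier G)"
    and "Factorial_Ring.prime p"
    and "\<exists>n. card (carrier G) = p ^ n"
    and "f \<in> iso G G"
    and "quandle_latin (carrier G) (coset_qop G f)"
    and "quandle_involutory (carrier G) (coset_qop G f)"
    and "simply_connected (carrier G) (coset_qop G f)"
  shows "cyclic_group G"
proof (rule ccontr)
  assume not_cyclic: "\<not> cyclic_group G"
  interpret group G by fact
  have f_hom: "f \<in> hom G G"
    using assms(5) by (simp add: iso_def)
  have f_inv: "f x = inv\<^bsub>G\<^esub> x" if "x \<in> carrier G" for x
    using coset_qop_latin_involutory_imp_inv[OF f_hom assms(6,7) that] .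
  interpret comm_group G
    by (rule comm_group_if_inv_mult_distrib) (metis f_inv f_hom hom_mult m_closed)
  obtain n where card: "card (carrier G) = p ^ n"
    using assms(4) by blast
  obtain \<phi> \<psi> u v where \<phi>: "mod_character G (int p) \<phi>" and \<psi>: "mod_character G (int p) \<psi>"
    and uv: "u \<in> carrier G" "v \<in> carrier G" and wedge_uv: "\<not> [wedge \<phi> \<psi> u v = 0] (mod int p)"
    using p_group_not_cyclic_imp_wedge_not_cong_0[OF assms(2) card assms(3) not_cyclic] by blast
  have "0 < p"
    using assms(3) prime_gt_0_nat by blast
  with wedge_uv show False
    using simply_connected_core_imp_wedge_cong_0[OF coset_qop_eq_core[OF f_inv] assms(6,8) _ \<phi> \<psi> uv]
    by blast
qed

end
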